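(* The family $\mathfrak{F}^*=\{\tilde{\omega},\tilde{\omega^*}\}\cup\{\tilde{L}_n:n\geq 2\}$ is $\mathbf{PL}$-learnable.
   Context: Partial orders are structures in the language $\{\leq\}$. $\omega$ and $\omega^*$ are the linear orders of the natural numbers and of the negative integers; $L_n$ is the finite linear order with $n$ elements. For a partial order $L$, $\tilde{L}$ is $L$ together with infinitely many new elements that are pairwise incomparable and incomparable to the elements of $L$ (presented with domain $\mathbb{N}$). All structures have domain $\mathbb{N}$ and are identified with their atomic diagrams. For a family $\mathfrak{K}$ (countable set of pairwise nonisomorphic structures), $\mathcal{S}\restriction_s$ is the finite substructure of $\mathcal{S}$ on $\{0,\dots,s\}$ and $\mathrm{LD}(\mathfrak{K})$ is the set of structures with domain $\mathbb{N}$ isomorphic to a member of $\mathfrak{K}$. A learner is an arbitrary function from $\{\mathcal{S}\restriction_s:\mathcal{S}\in\mathrm{LD}(\mathfrak{K})\}$ to $\{\ulcorner\mathcal{A}\urcorner:\mathcal{A}\in\mathfrak{K}\}\cup\{?\}$. $\mathfrak{K}$ is $\mathbf{PL}$-learnable if some learner $\mathbf{M}$ satisfies: for every $\mathcal{S}\in\mathrm{LD}(\mathfrak{K})$ and $\mathcal{A}\in\mathfrak{K}$, $\{n:\mathbf{M}(\mathcal{S}\restriction_n)=\ulcorner\mathcal{A}\urcorner\}$ is infinite iff $\mathcal{A}\cong\mathcal{S}$. *)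

theory Defs
  imports Main
begin

text \<open>A structure in the language {\<le>} with domain \<nat>, given by its (atomic diagram of the)
  binary relation.\<close>
type_synonym struct = "nat \<Rightarrow> nat \<Rightarrow> bool"

definition iso :: "struct \<Rightarrow> struct \<Rightarrow> bool" where
  "iso S T \<longleftrightarrow> (\<exists>f. bij f \<and> (\<forall>x y. S x y \<longleftrightarrow> T (f x) (f y)))"

text \<open>The finite substructure S restricted to {0,...,s}: its size parameter together with
  its atomic diagram (the pairs of related elements among 0..s).\<close>
definition restr :: "struct \<Rightarrow> nat \<Rightarrow> nat \<times> (nat \<times> nat) set" where
  "restr S s = (s, {(a, b). a \<le> s \<and> b \<le> s \<and> S a b})"

text \<open>A family of structures, indexed by codes of type 'i (the codes are the indices).
  LD K: structures with domain \<nat> isomorphic to some member of K.\<close>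
definition LD :: "('i \<Rightarrow> struct) \<Rightarrow> struct set" where
  "LD K = {S. \<exists>i. iso S (K i)}"

text \<open>PL-learnability. A learner maps finite substructures to a code or to ? (None).\<close>
definition PL_learnable :: "('i \<Rightarrow> struct) \<Rightarrow> bool" where
  "PL_learnable K \<longleftrightarrow>
     (\<exists>M :: nat \<times> (nat \<times> nat) set \<Rightarrow> 'i option.
        \<forall>S \<in> LD K. \<forall>i. infinite {n. M (restr S n) = Some i} \<longleftrightarrow> iso S (K i))"

text \<open>Presentations with domain \<nat>. omega~: the even numbers form a copy of \<omega>,
  the odd numbers are the extra pairwise incomparable elements.\<close>
definition omega_t :: struct where
  "omega_t x y \<longleftrightarrow> x = y \<or> (even x \<and> even y \<and> x \<le> y)"

text \<open>omega*~: the even numbers form a copy of \<omega>* (reversed order).\<close>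
definition omegastar_t :: struct where
  "omegastar_t x y \<longleftrightarrow> x = y \<or> (even x \<and> even y \<and> y \<le> x)"

text \<open>L_n~: elements 0..n-1 form a chain of length n, all others are isolated.\<close>
definition Ln_t :: "nat \<Rightarrow> struct" where
  "Ln_t n x y \<longleftrightarrow> x = y \<or> (x < n \<and> y < n \<and> x \<le> y)"

fun Fstar :: "nat \<Rightarrow> struct" where
  "Fstar 0 = omega_t"
| "Fstar (Suc 0) = omegastar_t"
| "Fstar (Suc (Suc k)) = Ln_t (Suc (Suc k))"

end

theory Submission
  imports Defs
begin

text \<open>The learner watches the comparable part N of the finite substructure seen so far, i.e. the
  elements related to some other element. In a copy of \<omega>~ the least element of N stabilises
  while its greatest element changes infinitely often; in \<omega>*~ it is the other way round; in
  L_n~ everything stabilises and N eventually has exactly n elements. So the learner guesses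
  \<omega>*~ when the least part of N has just changed, \<omega>~ when the greatest part has, and
  otherwise L_|N|~ if |N| \<ge> 2. In \<omega>~ and \<omega>*~ the size of N tends to infinity, so every
  wrong guess is made only finitely often.\<close>

definition nonisolated :: "struct \<Rightarrow> nat set \<Rightarrow> nat set" where
  "nonisolated R A = {a \<in> A. \<exists>b \<in> A. b \<noteq> a \<and> (R a b \<or> R b a)}"

definition least_elems :: "struct \<Rightarrow> nat set \<Rightarrow> nat set" where
  "least_elems R N = {a \<in> N. \<forall>b \<in> N. R a b}"

definition greatest_elems :: "struct \<Rightarrow> nat set \<Rightarrow> nat set" where
  "greatest_elems R N = {a \<in> N. \<forall>b \<in> N. R b a}"

text \<open>The guess after enlarging the domain A' to A; the codes are those of Fstar.\<close>

definition guess :: "struct \<Rightarrow> nat set \<Rightarrow> nat set \<Rightarrow> nat option" where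
  "guess R A A' =
     (let N = nonisolated R A; N' = nonisolated R A' in
      if least_elems R N \<noteq> least_elems R N' then Some 1
      else if greatest_elems R N \<noteq> greatest_elems R N' then Some 0
      else if 2 \<le> card N then Some (card N) else None)"

definition learner :: "nat \<times> (nat \<times> nat) set \<Rightarrow> nat option" where
  "learner p = guess (\<lambda>a b. (a, b) \<in> snd p) {..fst p} {..<fst p}"

lemma guess_cong:
  assumes "A' \<subseteq> A" and R: "\<And>a b. a \<in> A \<Longrightarrow> b \<in> A \<Longrightarrow> R a b = R' a b"
  shows "guess R A A' = guess R' A A'"
proof -
  have nonisolated: "nonisolated R X = nonisolated R' X" if "X \<subseteq> A" for X
    using that R unfolding nonisolated_def by blast
  have parts: "least_elems R N = least_elems R' N" "greatest_elems R N = greatest_elems R' N"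
    if "N \<subseteq> A" for N
    using that R unfolding least_elems_def greatest_elems_def by blast+
  have "nonisolated R' A \<subseteq> A" "nonisolated R' A' \<subseteq> A"
    using assms(1) unfolding nonisolated_def by blast+
  then show ?thesis
    using assms(1) unfolding guess_def Let_def by (simp add: nonisolated parts)
qed

lemma nonisolated_image:
  assumes "inj f"
  shows "nonisolated T (f ` A) = f ` nonisolated (\<lambda>x y. T (f x) (f y)) A"
  using assms unfolding nonisolated_def by (auto simp: inj_eq intro!: imageI)

lemma least_elems_image: "least_elems T (f ` N) = f ` least_elems (\<lambda>x y. T (f x) (f y)) N"
  unfolding least_elems_def by auto

lemma greatest_elems_image: "greatest_elems T (f ` N) = f ` greatest_elems (\<lambda>x y. T (f x) (f y)) N"
  unfolding greatest_elems_def by auto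

lemma guess_image:
  assumes "inj f"
  shows "guess T (f ` A) (f ` A') = guess (\<lambda>x y. T (f x) (f y)) A A'"
proof -
  have "card (f ` X) = card X" for X
    using assms by (simp add: card_image inj_on_subset)
  with assms show ?thesis
    by (simp add: guess_def Let_def nonisolated_image least_elems_image greatest_elems_image
        inj_image_eq_iff)
qed

lemma learner_restr_iso:
  assumes "inj f" "\<And>x y. S x y = T (f x) (f y)"
  shows "learner (restr S n) = guess T (f ` {..<Suc n}) (f ` {..<n})"
proof -
  have S: "S = (\<lambda>x y. T (f x) (f y))"
    using assms(2) by blast
  have "learner (restr S n) = guess S {..n} {..<n}"
    unfolding learner_def restr_def by (auto intro: guess_cong)
  also have "\<dots> = guess T (f ` {..n}) (f ` {..<n})"
    unfolding S by (rule guess_image[OF assms(1), symmetric])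
  finally show ?thesis by (simp add: lessThan_Suc_atMost)
qed

definition PL_identifies :: "(nat \<Rightarrow> 'i option) \<Rightarrow> 'i \<Rightarrow> bool" where
  "PL_identifies G i \<longleftrightarrow>
     (\<exists>\<^sub>F n in sequentially. G n = Some i) \<and> (\<forall>j. j \<noteq> i \<longrightarrow> (\<forall>\<^sub>F n in sequentially. G n \<noteq> Some j))"

lemma PL_identifies_frequently_iff:
  assumes "PL_identifies G i"
  shows "(\<exists>\<^sub>F n in sequentially. G n = Some j) \<longleftrightarrow> j = i"
  using assms unfolding PL_identifies_def frequently_def by (auto elim: eventually_mono)

lemma PL_learnableI:
  fixes M :: "nat \<times> (nat \<times> nat) set \<Rightarrow> 'i option"
  assumes "\<And>S i. iso S (K i) \<Longrightarrow> PL_identifies (\<lambda>n. M (restr S n)) i"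
  shows "PL_learnable K"
  unfolding PL_learnable_def
proof (intro exI[of _ M] ballI allI)
  fix S i assume "S \<in> LD K"
  then obtain i0 where iso0: "iso S (K i0)" unfolding LD_def by blast
  have frequently_iff: "(\<exists>\<^sub>F n in sequentially. M (restr S n) = Some j) \<longleftrightarrow> j = i0" for j
    using PL_identifies_frequently_iff[OF assms[OF iso0]] .
  have "iso S (K i) \<longleftrightarrow> i = i0"
  proof
    assume "iso S (K i)"
    then have "\<exists>\<^sub>F n in sequentially. M (restr S n) = Some i"
      using assms unfolding PL_identifies_def by blast
    then show "i = i0" using frequently_iff by blast
  qed (use iso0 in simp)
  moreover have "infinite {n. M (restr S n) = Some i} \<longleftrightarrow> i = i0"
    using frequently_iff[of i] unfolding frequently_cofinite cofinite_eq_sequentially[symmetric] .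
  ultimately show "infinite {n. M (restr S n) = Some i} \<longleftrightarrow> iso S (K i)" by simp
qed

lemma PL_identifies_eventually:
  "\<forall>\<^sub>F n in sequentially. G n = Some i \<Longrightarrow> PL_identifies G i"
  unfolding PL_identifies_def
  by (auto intro: eventually_frequently elim: eventually_mono)

lemma eventually_constant_if_eventually_stable:
  fixes h :: "nat \<Rightarrow> 'a"
  assumes "\<forall>\<^sub>F s in sequentially. h (Suc s) = h s"
  shows "\<exists>c. \<forall>\<^sub>F s in sequentially. h s = c"
proof -
  obtain N where N: "\<And>s. N \<le> s \<Longrightarrow> h (Suc s) = h s"
    using assms unfolding eventually_sequentially by blast
  have "h s = h N" if "N \<le> s" for s
    using that by (induction s rule: dec_induct) (simp_all add: N)
  then show ?thesis unfolding eventually_sequentially by blast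
qed

text \<open>The behaviour of the learner on \<omega>~ and \<omega>*~, with M the greatest even element seen
  and C the number of even elements seen.\<close>

lemma PL_identifies_if_guessing_on_changes:
  fixes M C :: "nat \<Rightarrow> nat"
  assumes G: "\<forall>\<^sub>F s in sequentially. G s = (if M (Suc s) \<noteq> M s then Some c else Some (C (Suc s)))"
    and M: "filterlim M at_top sequentially" and C: "filterlim C at_top sequentially"
  shows "PL_identifies G c"
  unfolding PL_identifies_def
proof (intro conjI allI impI)
  have "\<exists>\<^sub>F s in sequentially. M (Suc s) \<noteq> M s"
  proof (rule ccontr)
    assume "\<not> (\<exists>\<^sub>F s in sequentially. M (Suc s) \<noteq> M s)"
    then obtain m where "\<forall>\<^sub>F s in sequentially. M s = m"
      using eventually_constant_if_eventually_stable by (auto simp: not_frequently)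
    moreover have "\<forall>\<^sub>F s in sequentially. Suc m \<le> M s"
      using M by (simp add: filterlim_at_top)
    ultimately have "\<forall>\<^sub>F s in sequentially. False"
      by eventually_elim simp
    then show False by simp
  qed
  then show "\<exists>\<^sub>F s in sequentially. G s = Some c"
    by (rule frequently_rev_mp) (use G in \<open>eventually_elim, auto\<close>)
next
  fix j assume "j \<noteq> c"
  have "\<forall>\<^sub>F s in sequentially. Suc j \<le> C (Suc s)"
    using C eventually_sequentially_Suc[of "\<lambda>s. Suc j \<le> C s"] by (simp add: filterlim_at_top)
  with G show "\<forall>\<^sub>F s in sequentially. G s \<noteq> Some j"
    by eventually_elim (use \<open>j \<noteq> c\<close> in auto)
qed

lemma eventually_subset_image_lessThan:
  fixes f :: "nat \<Rightarrow> 'a"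
  assumes "surj f" "finite X"
  shows "\<forall>\<^sub>F s in sequentially. X \<subseteq> f ` {..<s}"
proof -
  obtain N where N: "\<And>x. x \<in> X \<Longrightarrow> inv f x < N"
    using assms(2) finite_nat_set_iff_bounded[of "inv f ` X"] by blast
  have "X \<subseteq> f ` {..<s}" if "N \<le> s" for s
  proof
    fix x assume "x \<in> X"
    then have "inv f x \<in> {..<s}" using N that by fastforce
    then show "x \<in> f ` {..<s}" using surj_f_inv_f[OF assms(1)] by (metis image_eqI)
  qed
  then show ?thesis unfolding eventually_sequentially by blast
qed

lemma filterlim_card_evens_image:
  fixes f :: "nat \<Rightarrow> nat"
  assumes "surj f"
  shows "filterlim (\<lambda>s. card {x \<in> f ` {..<s}. even x}) at_top sequentially"
  unfolding filterlim_at_top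
proof
  fix n
  show "\<forall>\<^sub>F s in sequentially. n \<le> card {x \<in> f ` {..<s}. even x}"
    using eventually_subset_image_lessThan[OF assms, of "(\<lambda>i. 2 * i) ` {..<n}", simplified]
  proof eventually_elim
    case (elim s)
    then have "(\<lambda>i. 2 * i) ` {..<n} \<subseteq> {x \<in> f ` {..<s}. even x}" by auto
    then have "card ((\<lambda>i. 2 * i) ` {..<n}) \<le> card {x \<in> f ` {..<s}. even x}"
      by (rule card_mono[rotated]) simp
    then show ?case by (simp add: card_image inj_on_def)
  qed
qed

lemma filterlim_Max_evens_image:
  fixes f :: "nat \<Rightarrow> nat"
  assumes "surj f"
  shows "filterlim (\<lambda>s. Max {x \<in> f ` {..<s}. even x}) at_top sequentially"
  unfolding filterlim_at_top
proof
  fix n :: nat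
  show "\<forall>\<^sub>F s in sequentially. n \<le> Max {x \<in> f ` {..<s}. even x}"
    using eventually_subset_image_lessThan[OF assms, of "{2 * n}", simplified]
    by eventually_elim (rule order_trans[of _ "2 * n"], simp, rule Max_ge, auto)
qed

lemma nonisolated_omega:
  assumes "a \<in> A" "b \<in> A" "a \<noteq> b" "even a" "even b"
  shows "nonisolated omega_t A = {x \<in> A. even x}"
proof -
  have "x \<in> nonisolated omega_t A" if "x \<in> A" "even x" for x
  proof (cases "x = a")
    case True
    with assms that show ?thesis unfolding nonisolated_def omega_t_def by (auto intro!: bexI[of _ b])
  next
    case False
    with assms that show ?thesis unfolding nonisolated_def omega_t_def by (auto intro!: bexI[of _ a])
  qed
  then show ?thesis unfolding nonisolated_def omega_t_def by auto
qed

lemma least_elems_omega: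
  assumes "finite E" "E \<noteq> {}" "\<forall>x \<in> E. even x"
  shows "least_elems omega_t E = {Min E}"
  using assms unfolding least_elems_def omega_t_def by (auto intro: Min_in Min_eqI[symmetric])

lemma greatest_elems_omega:
  assumes "finite E" "E \<noteq> {}" "\<forall>x \<in> E. even x"
  shows "greatest_elems omega_t E = {Max E}"
  using assms unfolding greatest_elems_def omega_t_def by (auto intro: Max_in Max_eqI[symmetric])

lemma omega_t_parts:
  assumes "{0, 2} \<subseteq> A" "finite A"
  shows "nonisolated omega_t A = {x \<in> A. even x}"
    and "least_elems omega_t (nonisolated omega_t A) = {0}"
    and "greatest_elems omega_t (nonisolated omega_t A) = {Max {x \<in> A. even x}}"
proof -
  let ?E = "{x \<in> A. even x}"
  show N: "nonisolated omega_t A = ?E"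
    using assms nonisolated_omega[of 0 A 2] by simp
  have E: "finite ?E" "?E \<noteq> {}" "\<forall>x \<in> ?E. even x" and zero: "0 \<in> ?E"
    using assms by auto
  have "Min ?E = 0" by (rule Min_eqI) (use E(1) zero in auto)
  then show "least_elems omega_t (nonisolated omega_t A) = {0}"
      and "greatest_elems omega_t (nonisolated omega_t A) = {Max ?E}"
    unfolding N least_elems_omega[OF E] greatest_elems_omega[OF E] by simp_all
qed

lemma card_evens_ge_2: "{0, 2} \<subseteq> A \<Longrightarrow> finite A \<Longrightarrow> 2 \<le> card {x \<in> A. even (x :: nat)}"
  using card_mono[of "{x \<in> A. even x}" "{0, 2}"] by auto

lemma guess_omega:
  assumes "{0, 2} \<subseteq> A'" "A' \<subseteq> A" "finite A"
  shows "guess omega_t A A' =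
    (if Max {x \<in> A. even x} \<noteq> Max {x \<in> A'. even x} then Some 0 else Some (card {x \<in> A. even x}))"
proof -
  have "{0, 2} \<subseteq> A" "finite A'" using assms finite_subset by auto
  then show ?thesis
    using assms omega_t_parts[of A] omega_t_parts[of A'] card_evens_ge_2[of A]
    unfolding guess_def Let_def by simp
qed

lemma omegastar_t_converse: "omegastar_t x y = omega_t y x"
  by (auto simp: omegastar_t_def omega_t_def)

lemma nonisolated_omegastar: "nonisolated omegastar_t A = nonisolated omega_t A"
  unfolding nonisolated_def omegastar_t_converse by blast

lemma least_elems_omegastar: "least_elems omegastar_t N = greatest_elems omega_t N"
  unfolding least_elems_def greatest_elems_def omegastar_t_converse ..

lemma greatest_elems_omegastar: "greatest_elems omegastar_t N = least_elems omega_t N"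
  unfolding least_elems_def greatest_elems_def omegastar_t_converse ..

lemma guess_omegastar:
  assumes "{0, 2} \<subseteq> A'" "A' \<subseteq> A" "finite A"
  shows "guess omegastar_t A A' =
    (if Max {x \<in> A. even x} \<noteq> Max {x \<in> A'. even x} then Some 1 else Some (card {x \<in> A. even x}))"
proof -
  have "{0, 2} \<subseteq> A" "finite A'" using assms finite_subset by auto
  then show ?thesis
    using assms omega_t_parts[of A] omega_t_parts[of A'] card_evens_ge_2[of A]
    unfolding guess_def Let_def nonisolated_omegastar least_elems_omegastar greatest_elems_omegastar
    by simp
qed

lemma PL_identifies_omega:
  fixes f :: "nat \<Rightarrow> nat"
  assumes "surj f"
  shows "PL_identifies (\<lambda>s. guess omega_t (f ` {..<Suc s}) (f ` {..<s})) 0"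
proof (rule PL_identifies_if_guessing_on_changes[where M = "\<lambda>s. Max {x \<in> f ` {..<s}. even x}"
      and C = "\<lambda>s. card {x \<in> f ` {..<s}. even x}"])
  show "\<forall>\<^sub>F s in sequentially. guess omega_t (f ` {..<Suc s}) (f ` {..<s}) =
      (if Max {x \<in> f ` {..<Suc s}. even x} \<noteq> Max {x \<in> f ` {..<s}. even x} then Some 0
       else Some (card {x \<in> f ` {..<Suc s}. even x}))"
    using eventually_subset_image_lessThan[OF assms, of "{0, 2}", simplified]
    by eventually_elim (rule guess_omega, auto)
qed (use filterlim_Max_evens_image filterlim_card_evens_image assms in auto)

lemma PL_identifies_omegastar:
  fixes f :: "nat \<Rightarrow> nat"
  assumes "surj f"
  shows "PL_identifies (\<lambda>s. guess omegastar_t (f ` {..<Suc s}) (f ` {..<s})) 1"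
proof (rule PL_identifies_if_guessing_on_changes[where M = "\<lambda>s. Max {x \<in> f ` {..<s}. even x}"
      and C = "\<lambda>s. card {x \<in> f ` {..<s}. even x}"])
  show "\<forall>\<^sub>F s in sequentially. guess omegastar_t (f ` {..<Suc s}) (f ` {..<s}) =
      (if Max {x \<in> f ` {..<Suc s}. even x} \<noteq> Max {x \<in> f ` {..<s}. even x} then Some 1
       else Some (card {x \<in> f ` {..<Suc s}. even x}))"
    using eventually_subset_image_lessThan[OF assms, of "{0, 2}", simplified]
    by eventually_elim (rule guess_omegastar, auto)
qed (use filterlim_Max_evens_image filterlim_card_evens_image assms in auto)

lemma nonisolated_Ln:
  assumes "2 \<le> k" "{..<k} \<subseteq> A"
  shows "nonisolated (Ln_t k) A = {..<k}"
proof
  show "nonisolated (Ln_t k) A \<subseteq> {..<k}" unfolding nonisolated_def Ln_t_def by auto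
  show "{..<k} \<subseteq> nonisolated (Ln_t k) A"
  proof
    fix a assume a: "a \<in> {..<k}"
    define b :: nat where "b = (if a = 0 then 1 else 0)"
    have "b < k" "b \<noteq> a" using assms(1) by (auto simp: b_def)
    then show "a \<in> nonisolated (Ln_t k) A"
      unfolding nonisolated_def Ln_t_def using a assms(2) by (cases "a \<le> b") (auto intro!: bexI[of _ b])
  qed
qed

lemma guess_Ln: "2 \<le> k \<Longrightarrow> {..<k} \<subseteq> A' \<Longrightarrow> A' \<subseteq> A \<Longrightarrow> guess (Ln_t k) A A' = Some k"
  using nonisolated_Ln[of k A] nonisolated_Ln[of k A'] unfolding guess_def Let_def by auto

lemma PL_identifies_Ln:
  fixes f :: "nat \<Rightarrow> nat"
  assumes "surj f" "2 \<le> k"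
  shows "PL_identifies (\<lambda>s. guess (Ln_t k) (f ` {..<Suc s}) (f ` {..<s})) k"
  using eventually_subset_image_lessThan[OF assms(1), of "{..<k}", simplified]
  by (intro PL_identifies_eventually, eventually_elim) (rule guess_Ln, use assms(2) in auto)

lemma PL_identifies_Fstar:
  fixes f :: "nat \<Rightarrow> nat"
  assumes "surj f"
  shows "PL_identifies (\<lambda>s. guess (Fstar i) (f ` {..<Suc s}) (f ` {..<s})) i"
  using assms PL_identifies_omega PL_identifies_omegastar PL_identifies_Ln
  by (cases i rule: Fstar.cases) simp_all

theorem mainTheorem17:
  shows "PL_learnable Fstar"
proof (rule PL_learnableI[where M = learner])
  fix S i assume "iso S (Fstar i)"
  then obtain f where f: "bij f" "\<And>x y. S x y = Fstar i (f x) (f y)"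
    unfolding iso_def by blast
  then have "learner (restr S n) = guess (Fstar i) (f ` {..<Suc n}) (f ` {..<n})" for n
    by (intro learner_restr_iso) (simp_all add: bij_is_inj)
  then show "PL_identifies (\<lambda>n. learner (restr S n)) i"
    using PL_identifies_Fstar[OF bij_is_surj[OF f(1)]] by simp
qed

end
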